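(* If $(A,W)$ is a Pratt comonoid, then $W$ is closed under forming unions of pairwise disjoint families (of arbitrary cardinality) of its members.
   Context: A Pratt comonoid is a pair $(A,W)$ where $A$ is a set and $W$ is a set of subsets of $A$ such that (i) $\emptyset\in W$ and $A\in W$; (ii) whenever $C\subseteq A\times A$ is such that for every $a\in A$ both the $a$-th row $\{b\mid (a,b)\in C\}$ and the $a$-th column $\{b\mid (b,a)\in C\}$ belong to $W$ (a crossword over $W$), the diagonal $\{b\mid (b,b)\in C\}$ also belongs to $W$. *)

theory Defs
  imports Main
begin

definition crossword :: "'a set \<Rightarrow> 'a set set \<Rightarrow> ('a \<times> 'a) set \<Rightarrow> bool" where
  "crossword A W C \<longleftrightarrow> C \<subseteq> A \<times> A \<and>
     (\<forall>a\<in>A. {b. (a, b) \<in> C} \<in> W \<and> {b. (b, a) \<in> C} \<in> W)"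

definition pratt_comonoid :: "'a set \<Rightarrow> 'a set set \<Rightarrow> bool" where
  "pratt_comonoid A W \<longleftrightarrow> W \<subseteq> Pow A \<and> {} \<in> W \<and> A \<in> W \<and>
     (\<forall>C. crossword A W C \<longrightarrow> {b. (b, b) \<in> C} \<in> W)"

end

theory Submission
  imports Defs
begin

text \<open>The members of a disjoint family \<open>F \<subseteq> W\<close> are the blocks of the block-diagonal
  relation \<open>\<Union>X\<in>F. X \<times> X\<close>: each of its rows and columns is either a block or empty, so it
  is a crossword over \<open>W\<close>, and its diagonal is \<open>\<Union>F\<close>.\<close>

definition block_diagonal :: "'a set set \<Rightarrow> ('a \<times> 'a) set" where
  "block_diagonal F = (\<Union>X\<in>F. X \<times> X)"

lemma column_eq_row_block_diagonal:
  "{b. (b, a) \<in> block_diagonal F} = {b. (a, b) \<in> block_diagonal F}"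
  unfolding block_diagonal_def by blast

lemma row_block_diagonal_in_block:
  assumes "pairwise disjnt F" and "X \<in> F" and "a \<in> X"
  shows "{b. (a, b) \<in> block_diagonal F} = X"
  using assms unfolding block_diagonal_def pairwise_def disjnt_def by blast

lemma row_block_diagonal_outside:
  assumes "a \<notin> \<Union>F"
  shows "{b. (a, b) \<in> block_diagonal F} = {}"
  using assms unfolding block_diagonal_def by blast

lemma diagonal_block_diagonal: "{b. (b, b) \<in> block_diagonal F} = \<Union>F"
  unfolding block_diagonal_def by blast

lemma row_block_diagonal_mem:
  assumes "{} \<in> W" and "F \<subseteq> W" and "pairwise disjnt F"
  shows "{b. (a, b) \<in> block_diagonal F} \<in> W"
proof (cases "a \<in> \<Union>F")
  case True
  then obtain X where X: "X \<in> F" "a \<in> X" by blast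
  have "{b. (a, b) \<in> block_diagonal F} = X"
    using assms(3) X by (rule row_block_diagonal_in_block)
  with X(1) assms(2) show ?thesis by blast
next
  case False
  show ?thesis by (simp only: row_block_diagonal_outside[OF False] assms(1))
qed

lemma crossword_block_diagonal:
  assumes "W \<subseteq> Pow A" and "{} \<in> W" and "F \<subseteq> W" and "pairwise disjnt F"
  shows "crossword A W (block_diagonal F)"
proof -
  have "block_diagonal F \<subseteq> A \<times> A"
    using assms(1,3) unfolding block_diagonal_def by blast
  moreover have "{b. (a, b) \<in> block_diagonal F} \<in> W" for a
    using assms(2-4) by (rule row_block_diagonal_mem)
  ultimately show ?thesis
    unfolding crossword_def column_eq_row_block_diagonal by blast
qed

lemma pratt_comonoid_Union_disjoint:
  assumes "pratt_comonoid A W" and "F \<subseteq> W" and "pairwise disjnt F"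
  shows "\<Union>F \<in> W"
proof -
  have "W \<subseteq> Pow A" "{} \<in> W"
    using assms(1) unfolding pratt_comonoid_def by simp_all
  then have "crossword A W (block_diagonal F)"
    using assms(2,3) by (rule crossword_block_diagonal)
  then have "{b. (b, b) \<in> block_diagonal F} \<in> W"
    using assms(1) unfolding pratt_comonoid_def by simp
  then show ?thesis by (simp only: diagonal_block_diagonal)
qed

theorem corollary4p2:
  fixes A :: "'a set" and W :: "'a set set" and F :: "'a set set"
  assumes "pratt_comonoid A W"
    and "F \<subseteq> W"
    and "\<forall>X\<in>F. \<forall>Y\<in>F. X \<noteq> Y \<longrightarrow> X \<inter> Y = {}"
  shows "\<Union>F \<in> W"
proof -
  have "pairwise disjnt F"
    using assms(3) unfolding pairwise_def disjnt_def by blast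
  with assms(1,2) show ?thesis by (rule pratt_comonoid_Union_disjoint)
qed

end
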